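(* Let $n\ge 2$. The function $\mathbf{H}:[0,1]^n\to[0,1]$ is a pre-aggregation function.
   Context: For $\mathbf{x}\in[0,1]^n$ let $x_{(1)}\ge\dots\ge x_{(n)}$ be its entries in decreasing order, and define the median $Med(\mathbf{x})=\frac12(x_{(k)}+x_{(k+1)})$ if $n=2k$ and $Med(\mathbf{x})=x_{(k+1)}$ if $n=2k+1$. Define $f_i(\mathbf{x})=\frac1n$ if $x_1=\dots=x_n$, and otherwise $f_i(\mathbf{x})=\frac{1}{n-1}\Big(1-\frac{|x_i-Med(\mathbf{x})|}{\sum_{j=1}^n|x_j-Med(\mathbf{x})|}\Big)$. Then $\mathbf{H}(\mathbf{x})=\sum_{i=1}^n f_i(\mathbf{x})\,x_i$. For a nonzero $\mathbf{r}\in\mathbb{R}^n$, $F:[0,1]^n\to[0,1]$ is $\mathbf{r}$-increasing if $F(\mathbf{x})\le F(x_1+tr_1,\dots,x_n+tr_n)$ for all $\mathbf{x}\in[0,1]^n$ and $t>0$ with $(x_1+tr_1,\dots,x_n+tr_n)\in[0,1]^n$. $F$ is a pre-aggregation function if $F(0,\dots,0)=0$, $F(1,\dots,1)=1$ and $F$ is $\mathbf{r}$-increasing for some nonzero $\mathbf{r}\in[0,1]^n$. *)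

theory Defs
  imports Complex_Main
begin

text \<open>Points of [0,1]^n are represented as real lists of length n (entry i is x_(i+1)).\<close>

definition in_cube :: "nat \<Rightarrow> real list \<Rightarrow> bool" where
  "in_cube n xs \<longleftrightarrow> length xs = n \<and> (\<forall>x\<in>set xs. 0 \<le> x \<and> x \<le> 1)"

text \<open>Median: with s = sort xs ascending, the decreasing order statistic x_(i) is s!(n-i).
  For n = 2k: (x_(k)+x_(k+1))/2 = (s!k + s!(k-1))/2; for n = 2k+1: x_(k+1) = s!k.\<close>
definition Med :: "real list \<Rightarrow> real" where
  "Med xs = (let s = sort xs; n = length xs; k = n div 2 in
      if even n then (s ! (k - 1) + s ! k) / 2 else s ! k)"

definition fw :: "real list \<Rightarrow> nat \<Rightarrow> real" where
  "fw xs i = (let n = length xs; m = Med xs in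
     if (\<forall>j<n. xs ! j = xs ! 0) then 1 / real n
     else (1 / (real n - 1)) * (1 - \<bar>xs ! i - m\<bar> / (\<Sum>j<n. \<bar>xs ! j - m\<bar>)))"

definition H :: "real list \<Rightarrow> real" where
  "H xs = (\<Sum>i<length xs. fw xs i * xs ! i)"

definition r_increasing :: "nat \<Rightarrow> (real list \<Rightarrow> real) \<Rightarrow> real list \<Rightarrow> bool" where
  "r_increasing n F r \<longleftrightarrow>
     (\<forall>x t. in_cube n x \<and> t > 0 \<and> in_cube n (map2 (\<lambda>a b. a + t * b) x r)
        \<longrightarrow> F x \<le> F (map2 (\<lambda>a b. a + t * b) x r))"

definition pre_aggregation :: "nat \<Rightarrow> (real list \<Rightarrow> real) \<Rightarrow> bool" where
  "pre_aggregation n F \<longleftrightarrow>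
     (\<forall>x. in_cube n x \<longrightarrow> 0 \<le> F x \<and> F x \<le> 1) \<and>
     F (replicate n 0) = 0 \<and> F (replicate n 1) = 1 \<and>
     (\<exists>r. in_cube n r \<and> r \<noteq> replicate n 0 \<and> r_increasing n F r)"

end

theory Submission
  imports Defs "HOL-Library.Multiset"
begin

text \<open>The weights fw xs i are nonnegative and sum to 1, so H is a convex combination of the
  entries: it maps [0,1]^n into [0,1] and fixes constant vectors. Translating every entry by t
  translates the median by t and leaves all deviations from the median, hence all weights,
  unchanged; therefore H (x + t(1,...,1)) = H x + t, and H is (1,...,1)-increasing.\<close>

lemma sort_map_mono:
  fixes f :: "'a::linorder \<Rightarrow> 'b::linorder"
  assumes "mono f"
  shows "sort (map f xs) = map f (sort xs)"
proof (rule properties_for_sort)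
  show "mset (map f (sort xs)) = mset (map f xs)" by simp
  show "sorted (map f (sort xs))"
    using assms by (intro sorted_map_mono) (auto intro: mono_on_subset)
qed

lemma Med_translate:
  assumes "xs \<noteq> []"
  shows "Med (map (\<lambda>a. a + t) xs) = Med xs + t"
proof -
  have "sort (map (\<lambda>a. a + t) xs) = map (\<lambda>a. a + t) (sort xs)"
    by (rule sort_map_mono) (auto intro: monoI)
  moreover have "length xs div 2 < length xs"
    using assms by simp
  ultimately show ?thesis
    by (auto simp: Med_def Let_def less_imp_diff_less)
qed

abbreviation constant_list :: "real list \<Rightarrow> bool" where
  "constant_list xs \<equiv> \<forall>j<length xs. xs ! j = xs ! 0"

lemma fw_constant:
  assumes "constant_list xs"
  shows "fw xs i = 1 / real (length xs)"
  using assms by (simp add: fw_def)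

lemma fw_nonconstant:
  assumes "\<not> constant_list xs"
  shows "fw xs i =
    1 / (real (length xs) - 1) * (1 - \<bar>xs ! i - Med xs\<bar> / (\<Sum>j<length xs. \<bar>xs ! j - Med xs\<bar>))"
  unfolding fw_def Let_def by (simp only: assms if_False)

lemma length_ge_2_if_nonconstant:
  assumes "\<not> constant_list xs"
  shows "2 \<le> length xs"
  using assms by (metis One_nat_def less_2_cases not_le not_less0 less_one)

lemma sum_abs_dev_pos_if_nonconstant:
  assumes "\<not> constant_list xs"
  shows "0 < (\<Sum>j<length xs. \<bar>xs ! j - m\<bar>)"
proof (rule ccontr)
  assume "\<not> 0 < (\<Sum>j<length xs. \<bar>xs ! j - m\<bar>)"
  then have "(\<Sum>j<length xs. \<bar>xs ! j - m\<bar>) = 0"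
    by (simp add: sum_nonneg leD order.antisym)
  then have "\<forall>j<length xs. xs ! j = m"
    by (simp add: sum_nonneg_eq_0_iff)
  then show False
    using assms by (metis length_pos_if_in_set nth_mem)
qed

lemma constant_list_translate:
  "constant_list (map (\<lambda>a. a + t) xs) \<longleftrightarrow> constant_list xs"
  by (cases "xs = []") auto

lemma fw_translate:
  assumes "i < length xs"
  shows "fw (map (\<lambda>a. a + t) xs) i = fw xs i"
proof (cases "constant_list xs")
  case True
  then have "constant_list (map (\<lambda>a. a + t) xs)"
    using constant_list_translate by blast
  then show ?thesis
    using fw_constant[OF True] by (simp add: fw_constant)
next
  case False
  then have nonconstant: "\<not> constant_list (map (\<lambda>a. a + t) xs)"
    using constant_list_translate by blast
  have "xs \<noteq> []"
    using assms by auto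
  then show ?thesis
    using assms
    by (simp add: fw_nonconstant[OF False] fw_nonconstant[OF nonconstant] Med_translate)
qed

lemma sum_fw:
  assumes "xs \<noteq> []"
  shows "(\<Sum>i<length xs. fw xs i) = 1"
proof (cases "constant_list xs")
  case True
  then show ?thesis
    using assms by (simp add: fw_constant[OF True])
next
  case False
  define S where "S = (\<Sum>j<length xs. \<bar>xs ! j - Med xs\<bar>)"
  have "S > 0"
    unfolding S_def using False by (rule sum_abs_dev_pos_if_nonconstant)
  have "(\<Sum>i<length xs. fw xs i) =
      1 / (real (length xs) - 1) * (\<Sum>i<length xs. 1 - \<bar>xs ! i - Med xs\<bar> / S)"
    by (simp add: fw_nonconstant[OF False, folded S_def] sum_distrib_left)
  also have "(\<Sum>i<length xs. 1 - \<bar>xs ! i - Med xs\<bar> / S) = real (length xs) - S / S"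
    unfolding sum_subtractf sum_divide_distrib[symmetric] S_def by simp
  also have "\<dots> = real (length xs) - 1"
    using \<open>S > 0\<close> by simp
  finally show ?thesis
    using length_ge_2_if_nonconstant[OF False] by simp
qed

lemma fw_nonneg:
  assumes "i < length xs"
  shows "0 \<le> fw xs i"
proof (cases "constant_list xs")
  case True
  then show ?thesis
    by (simp add: fw_constant)
next
  case False
  have "\<bar>xs ! i - Med xs\<bar> \<le> (\<Sum>j<length xs. \<bar>xs ! j - Med xs\<bar>)"
    using assms by (intro member_le_sum) auto
  then have "\<bar>xs ! i - Med xs\<bar> / (\<Sum>j<length xs. \<bar>xs ! j - Med xs\<bar>) \<le> 1"
    using sum_abs_dev_pos_if_nonconstant[OF False] by simp
  then show ?thesis
    using length_ge_2_if_nonconstant[OF False] by (simp add: fw_nonconstant[OF False])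
qed

lemma H_translate:
  assumes "xs \<noteq> []"
  shows "H (map (\<lambda>a. a + t) xs) = H xs + t"
proof -
  have "H (map (\<lambda>a. a + t) xs) = (\<Sum>i<length xs. fw xs i * (xs ! i + t))"
    unfolding H_def by (intro sum.cong) (auto simp: fw_translate)
  also have "\<dots> = H xs + t * (\<Sum>i<length xs. fw xs i)"
    unfolding H_def by (simp add: algebra_simps sum.distrib sum_distrib_left)
  also have "\<dots> = H xs + t"
    using sum_fw[OF assms] by simp
  finally show ?thesis .
qed

lemma H_in_interval:
  assumes "xs \<noteq> []" and "set xs \<subseteq> {a..b}"
  shows "H xs \<in> {a..b}"
proof -
  have bounds: "a \<le> xs ! i" "xs ! i \<le> b" if "i < length xs" for i
    using assms(2) that nth_mem by fastforce+
  have "a = (\<Sum>i<length xs. fw xs i * a)"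
    using sum_fw[OF assms(1)] by (simp flip: sum_distrib_right)
  also have "\<dots> \<le> H xs"
    unfolding H_def using bounds by (intro sum_mono mult_left_mono fw_nonneg) auto
  finally have "a \<le> H xs" .
  have "H xs \<le> (\<Sum>i<length xs. fw xs i * b)"
    unfolding H_def using bounds by (intro sum_mono mult_left_mono fw_nonneg) auto
  also have "\<dots> = b"
    using sum_fw[OF assms(1)] by (simp flip: sum_distrib_right)
  finally show ?thesis
    using \<open>a \<le> H xs\<close> by simp
qed

lemma H_in_unit_interval:
  assumes "in_cube n x" and "n \<noteq> 0"
  shows "0 \<le> H x \<and> H x \<le> 1"
proof -
  have "x \<noteq> []" "set x \<subseteq> {0..1}"
    using assms by (auto simp: in_cube_def)
  from H_in_interval[OF this] show ?thesis
    by simp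
qed

lemma H_replicate:
  assumes "n \<noteq> 0"
  shows "H (replicate n c) = c"
  using H_in_interval[of "replicate n c" c c] assms by simp

lemma map2_add_scaled_replicate_1:
  fixes xs :: "'a::semiring_1 list"
  assumes "length xs = n"
  shows "map2 (\<lambda>a b. a + t * b) xs (replicate n 1) = map (\<lambda>a. a + t) xs"
  using assms by (simp add: list_eq_iff_nth_eq)

lemma H_r_increasing_diagonal:
  assumes "n \<noteq> 0"
  shows "r_increasing n H (replicate n 1)"
  unfolding r_increasing_def
proof (intro allI impI)
  fix x and t :: real
  assume "in_cube n x \<and> 0 < t \<and> in_cube n (map2 (\<lambda>a b. a + t * b) x (replicate n 1))"
  then have "length x = n" "0 < t"
    by (auto simp: in_cube_def)
  with assms show "H x \<le> H (map2 (\<lambda>a b. a + t * b) x (replicate n 1))"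
    by (auto simp: map2_add_scaled_replicate_1 H_translate)
qed

theorem corollary5:
  fixes n :: nat
  assumes "n \<ge> 2"
  shows "pre_aggregation n H"
proof -
  have "n \<noteq> 0"
    using assms by simp
  moreover have "in_cube n (replicate n 1)" "replicate n (1::real) \<noteq> replicate n 0"
    using \<open>n \<noteq> 0\<close> by (auto simp: in_cube_def)
  ultimately show ?thesis
    unfolding pre_aggregation_def
    using H_in_unit_interval H_replicate H_r_increasing_diagonal by blast
qed

end
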